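(* For every integer $r\ge0$, $\lambda\ge0$ and $y\in\mathbb{R}^n$, $$\max_{J\in\mathcal{I}:\, n\in J}\ \min_{I\in\mathcal{I}:\, n\in I,\ I\subseteq J}\Big[(P^{(|I|,r)}y_I)_n+\frac{\lambda C_{I,J}}{|I|}\Big]\le\min_{J\in\mathcal{I}:\, n\in J}\ \max_{I\in\mathcal{I}:\, n\in I,\ I\subseteq J}\Big[(P^{(|I|,r)}y_I)_n-\frac{\lambda C_{I,J}}{|I|}\Big],$$ and likewise $$\max_{J\in\mathcal{D}_n}\ \min_{I\in\mathcal{D}_n:\, I\subseteq J}\Big[(P^{(|I|,r)}y_I)_n+\frac{\lambda C_{I,J}}{|I|}\Big]\le\min_{J\in\mathcal{D}_n}\ \max_{I\in\mathcal{D}_n:\, I\subseteq J}\Big[(P^{(|I|,r)}y_I)_n-\frac{\lambda C_{I,J}}{|I|}\Big].$$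
   Context: $[n]=\{1,\dots,n\}$; an interval is $[a:b]=\{a,\dots,b\}$; $\mathcal{I}$ the set of all intervals of $[n]$. For $I=[a:b]$, $P^{(|I|,r)}$ is the orthogonal projection in $\mathbb{R}^{|I|}$ onto $\{(p(a/n),\dots,p(b/n)):p\text{ polynomial of degree}\le r\}$ and $(P^{(|I|,r)}y_I)_n$ is the last entry of $P^{(|I|,r)}y_I$ when $n\in I$. Here, for intervals $I\subseteq J$ both containing $n$: $C_{I,J}=1$ if $I\ne J$ and $C_{I,J}=-1$ if $I=J$. $\mathcal{D}_n=\{[l:n]: l\in\mathcal{L}_n\}$ where (for $n$ a power of 2, dyadic intervals being $[1:n]$ and all intervals obtained by repeated halving, forming a binary tree with singleton leaves at level $0$ and size $2^j$ at level $-j$) $\mathcal{L}_n=\{l_0,l_1,\dots\}$ with $l_0=n$, and if $l_j\ne1$ is the left endpoint of the level $-j$ dyadic interval $N$, then $l_{j+1}$ is the left endpoint of the parent of $N$ if $N$ is a right child, and the left endpoint of the dyadic interval immediately left of the parent if $N$ is a left child; stop when $l_j=1$. *)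

theory Defs
  imports Complex_Main "HOL-Computational_Algebra.Polynomial"
begin

definition intervals :: "nat \<Rightarrow> nat set set" where
  "intervals n = {{a..b} | a b. 1 \<le> a \<and> a \<le> b \<and> b \<le> n}"

text \<open>Orthogonal projection of y restricted to I onto the space of vectors
  (p(i/n))_{i in I}, p a real polynomial of degree <= r, evaluated at the
  coordinate n (the last entry of I when n is in I).  The projection v = P y
  is characterised as the element of the subspace with y - v orthogonal to
  the subspace.\<close>
definition proj_last :: "nat \<Rightarrow> nat \<Rightarrow> nat set \<Rightarrow> (nat \<Rightarrow> real) \<Rightarrow> real" where
  "proj_last n r I y =
     (THE t. \<exists>p :: real poly. degree p \<le> r \<and> t = poly p (real n / real n) \<and>
        (\<forall>q :: real poly. degree q \<le> r \<longrightarrow>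
           (\<Sum>i\<in>I. (y i - poly p (real i / real n)) * poly q (real i / real n)) = 0))"

definition Cc :: "nat set \<Rightarrow> nat set \<Rightarrow> real" where
  "Cc I J = (if I \<noteq> J then 1 else -1)"

text \<open>The sequence l_0, l_1, ... of left endpoints (for n a power of 2).
  If l_j is the left endpoint of the level -j dyadic interval
  [i 2^j + 1 : (i+1) 2^j] (so i = (l_j - 1) div 2^j), it is a right child iff i is odd;
  then the parent's left endpoint is l_j - 2^j, otherwise the left endpoint of the
  level -(j+1) interval immediately left of the parent is l_j - 2^(j+1).\<close>
fun dyL :: "nat \<Rightarrow> nat \<Rightarrow> nat" where
  "dyL n 0 = n"
| "dyL n (Suc j) = (let l = dyL n j in
     if l = 1 then 1
     else if odd ((l - 1) div 2 ^ j) then l - 2 ^ j else l - 2 ^ Suc j)"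

definition Ln :: "nat \<Rightarrow> nat set" where
  "Ln n = range (dyL n)"

definition Dn :: "nat \<Rightarrow> nat set set" where
  "Dn n = {{l..n} | l. l \<in> Ln n}"

end

theory Submission
  imports Defs
begin

text \<open>The intervals containing n, and likewise the members of D_n, all have the form
  [l:n], so they form a chain under inclusion.  For two
  members J1, J2 of a chain, the smaller one K = J1 \<inter> J2 is admissible on both sides,
  and at I = K one of the signs C(K,J1), C(K,J2) is -1 while the other is at most 1;
  so the inner minimum for J1 is at most the inner maximum for J2.\<close>

lemma Cc_add_nonpos: "K = J1 \<or> K = J2 \<Longrightarrow> Cc K J1 + Cc K J2 \<le> 0"
  by (auto simp: Cc_def)

lemma Min_penalized_le_Max_penalized:
  fixes F :: "nat set set" and f :: "nat set \<Rightarrow> real" and lam :: real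
  assumes "finite F" and "J1 \<in> F" and "J2 \<in> F" and "J1 \<subseteq> J2 \<or> J2 \<subseteq> J1" and "lam \<ge> 0"
  shows "Min ((\<lambda>I. f I + lam * Cc I J1 / real (card I)) ` {I \<in> F. I \<subseteq> J1})
       \<le> Max ((\<lambda>I. f I - lam * Cc I J2 / real (card I)) ` {I \<in> F. I \<subseteq> J2})"
proof -
  define K where "K = J1 \<inter> J2"
  have K: "K \<in> F" "K \<subseteq> J1" "K \<subseteq> J2" "K = J1 \<or> K = J2"
    using assms(2-4) by (auto simp: K_def Int_absorb1 Int_absorb2)
  have "lam * (Cc K J1 + Cc K J2) / real (card K) \<le> 0"
    using Cc_add_nonpos[OF K(4)] \<open>lam \<ge> 0\<close>
    by (intro divide_nonpos_nonneg mult_nonneg_nonpos) auto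
  then have penalty: "f K + lam * Cc K J1 / real (card K) \<le> f K - lam * Cc K J2 / real (card K)"
    by (simp add: distrib_left add_divide_distrib)
  have "Min ((\<lambda>I. f I + lam * Cc I J1 / real (card I)) ` {I \<in> F. I \<subseteq> J1})
      \<le> f K + lam * Cc K J1 / real (card K)"
    using \<open>finite F\<close> K by (intro Min_le) auto
  also note penalty
  also have "f K - lam * Cc K J2 / real (card K)
      \<le> Max ((\<lambda>I. f I - lam * Cc I J2 / real (card I)) ` {I \<in> F. I \<subseteq> J2})"
    using \<open>finite F\<close> K by (intro Max_ge) auto
  finally show ?thesis .
qed

lemma chain_Max_Min_penalized_le_Min_Max_penalized:
  fixes F :: "nat set set" and f :: "nat set \<Rightarrow> real" and lam :: real
  assumes "finite F" and "F \<noteq> {}" and "chain\<^sub>\<subseteq> F" and "lam \<ge> 0"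
  shows "Max ((\<lambda>J. Min ((\<lambda>I. f I + lam * Cc I J / real (card I)) ` {I \<in> F. I \<subseteq> J})) ` F)
       \<le> Min ((\<lambda>J. Max ((\<lambda>I. f I - lam * Cc I J / real (card I)) ` {I \<in> F. I \<subseteq> J})) ` F)"
  using assms Min_penalized_le_Max_penalized[OF \<open>finite F\<close> _ _ _ \<open>lam \<ge> 0\<close>]
  by (subst Max_le_iff) (auto simp: Min_ge_iff chain_subset_def)

lemma chain_subset_atLeastAtMost_upper:
  fixes n :: "'a::linorder"
  shows "chain\<^sub>\<subseteq> ((\<lambda>l. {l..n}) ` L)"
proof -
  have "{a..n} \<subseteq> {b..n} \<or> {b..n} \<subseteq> {a..n}" for a b
    by (cases "a \<le> b") (auto intro: order_trans)
  then show ?thesis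
    by (auto simp: chain_subset_def)
qed

lemma intervals_containing_upper: "{J \<in> intervals n. n \<in> J} = (\<lambda>l. {l..n}) ` {1..n}"
  by (auto simp: intervals_def)

lemma Dn_eq_image: "Dn n = (\<lambda>l. {l..n}) ` Ln n"
  by (auto simp: Dn_def)

lemma dyL_le: "dyL n j \<le> n"
  by (induction j) (auto simp: Let_def)

lemma finite_Ln: "finite (Ln n)"
  using dyL_le by (auto simp: Ln_def intro: finite_subset[of _ "{..n}"])

lemma Ln_nonempty: "Ln n \<noteq> {}"
  by (simp add: Ln_def)

theorem lemma3:
  fixes n r :: nat and lam :: real and y :: "nat \<Rightarrow> real"
  assumes "n \<ge> 1" and "lam \<ge> 0"
  shows "Max ((\<lambda>J. Min ((\<lambda>I. proj_last n r I y + lam * Cc I J / real (card I))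
               ` {I \<in> intervals n. n \<in> I \<and> I \<subseteq> J}))
           ` {J \<in> intervals n. n \<in> J})
       \<le> Min ((\<lambda>J. Max ((\<lambda>I. proj_last n r I y - lam * Cc I J / real (card I))
               ` {I \<in> intervals n. n \<in> I \<and> I \<subseteq> J}))
           ` {J \<in> intervals n. n \<in> J})
    \<and> ((\<exists>k. n = 2 ^ k) \<longrightarrow>
         Max ((\<lambda>J. Min ((\<lambda>I. proj_last n r I y + lam * Cc I J / real (card I))
               ` {I \<in> Dn n. I \<subseteq> J}))
           ` Dn n)
       \<le> Min ((\<lambda>J. Max ((\<lambda>I. proj_last n r I y - lam * Cc I J / real (card I))
               ` {I \<in> Dn n. I \<subseteq> J}))
           ` Dn n))"
proof -
  have restrict: "{I \<in> intervals n. n \<in> I \<and> I \<subseteq> J} = {I \<in> (\<lambda>l. {l..n}) ` {1..n}. I \<subseteq> J}"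
    for J by (subst intervals_containing_upper [symmetric]) auto
  show ?thesis
    unfolding restrict intervals_containing_upper Dn_eq_image
  proof (intro conjI impI chain_Max_Min_penalized_le_Min_Max_penalized
      chain_subset_atLeastAtMost_upper)
  qed (use assms finite_Ln Ln_nonempty in auto)
qed

end
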